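(* Let $m\geq 0$ and $k\geq 1$ be integers and let $n$ be a nonnegative integer with $t(m,k)\leq n\leq t(m+1,k)-1$, where \[ t(s,k)= s\left(\left\lfloor \frac{s}{k}\right\rfloor +1\right)k-\binom{\lfloor s/k\rfloor +1}{2}k^2 . \] Then $b(n,k)=m$.
   Context: For a cell $u$ of the Young diagram of a partition $\lambda$, the hook length of $u$ is the number of cells $v$ of the diagram with $v=u$, or $v$ below $u$ in the same column, or $v$ to the right of $u$ in the same row. $\alpha_k(\lambda)$ is the number of cells of the Young diagram of $\lambda$ with hook length exactly $k$. $P(n)$ is the set of partitions of $n$ (with $P(0)$ containing only the empty partition), and $b(n,k)=\max\{\alpha_k(\lambda)\colon\lambda\in P(n)\}$. *)

theory Defs
  imports Main
begin

definition is_partition :: "nat list \<Rightarrow> bool" where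
  "is_partition p \<longleftrightarrow> sorted_wrt (\<ge>) p \<and> (\<forall>x\<in>set p. 0 < x)"

definition partitions :: "nat \<Rightarrow> nat list set" where
  "partitions n = {p. is_partition p \<and> sum_list p = n}"

text \<open>Young diagram: cell (i,j) = row i, column j (0-based), English convention.\<close>
definition young_cells :: "nat list \<Rightarrow> (nat \<times> nat) set" where
  "young_cells p = {(i, j). i < length p \<and> j < p ! i}"

definition hook_length :: "nat list \<Rightarrow> nat \<times> nat \<Rightarrow> nat" where
  "hook_length p u = card {v \<in> young_cells p.
      v = u \<or> (snd v = snd u \<and> fst v > fst u) \<or> (fst v = fst u \<and> snd v > snd u)}"

definition alpha :: "nat \<Rightarrow> nat list \<Rightarrow> nat" where
  "alpha k p = card {u \<in> young_cells p. hook_length p u = k}"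

definition b :: "nat \<Rightarrow> nat \<Rightarrow> nat" where
  "b n k = Max (alpha k ` partitions n)"

definition t :: "nat \<Rightarrow> nat \<Rightarrow> int" where
  "t s k = int s * (int (s div k) + 1) * int k - int ((s div k + 1) choose 2) * int k ^ 2"

end

theory Submission
  imports Defs
begin

text \<open>Encode a partition \<open>\<lambda>\<close> with \<open>\<ell>\<close> parts by its beta set \<open>B = {\<lambda>\<^sub>i + \<ell> - i}\<close>, the hook
  lengths of its first column. Then \<open>|\<lambda>| = \<Sum>B - (|B| choose 2)\<close>, and the cells of hook length
  \<open>k\<close> correspond to the \<open>y \<in> B\<close> with \<open>y - k \<notin> B\<close>: on a \<open>k\<close>-abacus, the beads with an empty
  slot above them.

  A runner with \<open>c\<close> beads of which \<open>d\<close> can move has bead sum at least \<open>(d(d+1) + c(c-1))/2\<close>.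
  Summing over the \<open>k\<close> runners, a convexity inequality for the bead counts together with
  \<open>d(d+1) \<ge> 2(q + 1)d - q(q + 1)\<close> gives \<open>2|\<lambda>| \<ge> k(2(q + 1)\<alpha>\<^sub>k(\<lambda>) - kq(q + 1))\<close> for every \<open>q\<close>, hence
  \<open>\<alpha>\<^sub>k(\<lambda>) \<le> m\<close> whenever \<open>|\<lambda>| < t(m+1,k)\<close>.

  Conversely, for \<open>n \<ge> t(m,k)\<close> write \<open>m = qk + r\<close> and \<open>n - t(m,k) = ka + c\<close>. Putting \<open>q\<close> or
  \<open>q + 1\<close> beads on every other position of each runner, an extra bead at \<open>0\<close> on runner
  \<open>(c + r) mod k\<close>, and pushing the top bead of runner \<open>0\<close> down by \<open>a\<close> yields a beta set with at
  least \<open>m\<close> movable beads whose partition has size exactly \<open>n\<close>.\<close>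

section \<open>Beta numbers and hook lengths\<close>

text \<open>\<open>beta p i\<close> is the hook length of the first-column cell \<open>(i, 0)\<close>.\<close>
definition beta :: "nat list \<Rightarrow> nat \<Rightarrow> nat" where
  "beta p i = p ! i + (length p - 1 - i)"

definition beta_set :: "nat list \<Rightarrow> nat set" where
  "beta_set p = beta p ` {..<length p}"

text \<open>In abacus language, the elements of \<open>movable k B\<close> are the beads with an empty slot
  right above them on their runner; for \<open>B\<close> a beta set they correspond to the cells of hook
  length \<open>k\<close>.\<close>
definition movable :: "nat \<Rightarrow> nat set \<Rightarrow> nat" where
  "movable k B = card {y \<in> B. k \<le> y \<and> y - k \<notin> B}"

definition leg :: "nat list \<Rightarrow> nat \<Rightarrow> nat \<Rightarrow> nat" where
  "leg p i j = card {r. i < r \<and> r < length p \<and> j < p ! r}"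

lemma sorted_ge_nth_antimono:
  fixes p :: "nat list"
  assumes "sorted_wrt (\<ge>) p" "i \<le> j" "j < length p"
  shows "p ! j \<le> p ! i"
  using assms by (cases "i = j") (auto simp: sorted_wrt_iff_nth_less)

lemma beta_strict_antimono:
  assumes "sorted_wrt (\<ge>) p" "i < j" "j < length p"
  shows "beta p j < beta p i"
  using sorted_ge_nth_antimono[OF assms(1) less_imp_le[OF assms(2)] assms(3)] assms(2,3)
  unfolding beta_def by linarith

lemma beta_antimono:
  assumes "sorted_wrt (\<ge>) p" "i \<le> j" "j < length p"
  shows "beta p j \<le> beta p i"
  using beta_strict_antimono[OF assms(1) _ assms(3), of i] assms(2) by (cases "i = j") auto

lemma inj_on_beta:
  assumes "sorted_wrt (\<ge>) p"
  shows "inj_on (beta p) {..<length p}"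
proof (rule inj_onI)
  fix x y assume "x \<in> {..<length p}" "y \<in> {..<length p}" "beta p x = beta p y"
  then show "x = y" using beta_strict_antimono[OF assms, of x y] beta_strict_antimono[OF assms, of y x]
    by (cases x y rule: linorder_cases) auto
qed

lemma card_beta_set:
  assumes "sorted_wrt (\<ge>) p"
  shows "card (beta_set p) = length p"
  unfolding beta_set_def using card_image[OF inj_on_beta[OF assms]] by simp

lemma double_sum_lessThan: "2 * (\<Sum>i<n. i) = n * (n - 1 :: nat)"
  by (induction n) (auto simp: algebra_simps)

lemma of_nat_mult_pred: "int (n * (n - 1)) = int n * (int n - 1)"
  by (cases n) (simp_all add: algebra_simps)

lemma double_sum_beta_set:
  assumes "sorted_wrt (\<ge>) p"
  shows "2 * \<Sum>(beta_set p) = 2 * sum_list p + length p * (length p - 1)"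
proof -
  let ?l = "length p"
  have "\<Sum>(beta_set p) = (\<Sum>i<?l. beta p i)"
    unfolding beta_set_def by (simp add: sum.reindex[OF inj_on_beta[OF assms]])
  also have "\<dots> = (\<Sum>i<?l. p ! i) + (\<Sum>i<?l. ?l - 1 - i)"
    unfolding beta_def by (rule sum.distrib)
  also have "(\<Sum>i<?l. p ! i) = sum_list p"
    by (simp add: sum_list_sum_nth atLeast0LessThan)
  also have "(\<Sum>i<?l. ?l - 1 - i) = (\<Sum>i<?l. i)"
    using sum.nat_diff_reindex[of "\<lambda>i. i" ?l] by simp
  finally show ?thesis using double_sum_lessThan[of ?l] by simp
qed

lemma double_size_eq_beta_set:
  assumes "sorted_wrt (\<ge>) p"
  shows "2 * int (sum_list p)
    = 2 * int (\<Sum>(beta_set p)) - int (card (beta_set p)) * (int (card (beta_set p)) - 1)"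
proof -
  have "int (2 * \<Sum>(beta_set p)) = int (2 * sum_list p + length p * (length p - 1))"
    using double_sum_beta_set[OF assms] by (simp only:)
  then show ?thesis unfolding card_beta_set[OF assms] of_nat_add of_nat_mult_pred by simp
qed

lemma hook_length_eq:
  assumes "i < length p" "j < p ! i"
  shows "hook_length p (i, j) = (p ! i - j) + leg p i j"
proof -
  define C where "C = (\<lambda>r. (r, j)) ` {r. i < r \<and> r < length p \<and> j < p ! r}"
  define R where "R = (\<lambda>j'. (i, j')) ` {j<..<p ! i}"
  have hook: "{v \<in> young_cells p. v = (i, j) \<or> (snd v = snd (i, j) \<and> fst v > fst (i, j))
      \<or> (fst v = fst (i, j) \<and> snd v > snd (i, j))} = insert (i, j) (C \<union> R)"
    using assms by (auto simp: young_cells_def C_def R_def)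
  have "card C = leg p i j"
    unfolding C_def leg_def by (subst card_image) (auto simp: inj_on_def)
  moreover have "card R = p ! i - Suc j"
    unfolding R_def by (subst card_image) (auto simp: inj_on_def)
  moreover have "card (insert (i, j) (C \<union> R)) = Suc (card C + card R)"
  proof -
    have "finite C" "finite R" "C \<inter> R = {}" "(i, j) \<notin> C \<union> R"
      unfolding C_def R_def by auto
    then show ?thesis by (simp add: card_Un_disjoint)
  qed
  ultimately show ?thesis using assms unfolding hook_length_def hook by simp
qed

lemma leg_le:
  assumes "i < length p"
  shows "leg p i j \<le> length p - 1 - i"
proof -
  have "leg p i j \<le> card {i<..<length p}"
    unfolding leg_def by (rule card_mono) auto
  then show ?thesis by simp
qed

lemma leg_antimono: "j1 \<le> j2 \<Longrightarrow> leg p i j2 \<le> leg p i j1"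
  unfolding leg_def by (rule card_mono) auto

lemma leg_rows:
  assumes "sorted_wrt (\<ge>) p" "i < length p"
  shows "{r. i < r \<and> r < length p \<and> j < p ! r} = {i<..<i + 1 + leg p i j}"
proof -
  define R where "R = {r. i < r \<and> r < length p \<and> j < p ! r}"
  have "finite R" unfolding R_def by (rule finite_subset[of _ "{..<length p}"]) auto
  have down_closed: "r' \<in> R" if "r \<in> R" "i < r'" "r' \<le> r" for r r'
  proof -
    have "p ! r \<le> p ! r'" using sorted_ge_nth_antimono[OF assms(1) that(3)] that(1) by (simp add: R_def)
    then show ?thesis using that by (simp add: R_def)
  qed
  show ?thesis
  proof (cases "R = {}")
    case False
    define M where "M = Max R"
    have "M \<in> R" "\<forall>r\<in>R. r \<le> M" using False \<open>finite R\<close> unfolding M_def by simp_all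
    moreover have "i < M" using \<open>M \<in> R\<close> by (simp add: R_def)
    ultimately have "R = {i<..M}" using down_closed[OF \<open>M \<in> R\<close>] by (auto simp: R_def)
    then have "card R = M - i" by simp
    then show ?thesis unfolding leg_def R_def[symmetric] using \<open>R = {i<..M}\<close> \<open>i < M\<close> by auto
  qed (auto simp: leg_def R_def[symmetric])
qed

lemma hook_length_le_beta:
  assumes "i < length p" "j < p ! i"
  shows "hook_length p (i, j) \<le> beta p i"
  using hook_length_eq[OF assms] leg_le[OF assms(1), of j] unfolding beta_def by simp

lemma hook_length_pos:
  assumes "i < length p" "j < p ! i"
  shows "0 < hook_length p (i, j)"
  using hook_length_eq[OF assms] assms(2) by simp

lemma hook_length_strict_antimono:
  assumes "i < length p" "j1 < j2" "j2 < p ! i"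
  shows "hook_length p (i, j2) < hook_length p (i, j1)"
  using hook_length_eq[OF assms(1) assms(3)] hook_length_eq[OF assms(1), of j1]
    leg_antimono[of j1 j2 p i] assms by auto

lemma inj_on_hook_length_row:
  assumes "i < length p"
  shows "inj_on (\<lambda>j. hook_length p (i, j)) {..<p ! i}"
proof (rule inj_onI)
  fix j1 j2 assume "j1 \<in> {..<p ! i}" "j2 \<in> {..<p ! i}" "hook_length p (i, j1) = hook_length p (i, j2)"
  then show "j1 = j2"
    using hook_length_strict_antimono[OF assms, of j1 j2] hook_length_strict_antimono[OF assms, of j2 j1]
    by (cases j1 j2 rule: linorder_cases) auto
qed

text \<open>The hook of cell \<open>(i, j)\<close> ends in the row \<open>c - 1\<close> below which the column \<open>j\<close> stops,
  and \<open>beta p i - hook_length p (i, j)\<close> falls strictly between \<open>beta p c\<close> and \<open>beta p (c - 1)\<close>.\<close>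
lemma beta_minus_hook_length_notin:
  assumes sorted: "sorted_wrt (\<ge>) p" and cell: "i < length p" "j < p ! i"
  shows "beta p i - hook_length p (i, j) \<notin> beta_set p"
proof
  let ?l = "length p"
  define c where "c = i + 1 + leg p i j"
  have rows: "\<And>r. i < r \<Longrightarrow> r < ?l \<Longrightarrow> j < p ! r \<longleftrightarrow> r < c"
    using leg_rows[OF sorted cell(1), of j] unfolding c_def by (auto simp: set_eq_iff)
  have "c \<le> ?l" using leg_le[OF cell(1), of j] cell unfolding c_def by simp
  have diff: "beta p i - hook_length p (i, j) = j + ?l - c"
    using hook_length_eq[OF cell] leg_le[OF cell(1), of j] cell unfolding beta_def c_def by simp
  assume "beta p i - hook_length p (i, j) \<in> beta_set p"
  then obtain r where r: "r < ?l" "beta p r = j + ?l - c" using diff unfolding beta_set_def by auto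
  show False
  proof (cases "r \<le> i")
    case True
    then show ?thesis
      using beta_antimono[OF sorted True cell(1)] r diff hook_length_pos[OF cell]
        hook_length_le_beta[OF cell] by linarith
  next
    case False
    then have "j < p ! r \<longleftrightarrow> r < c" using rows r(1) by simp
    then show ?thesis using r \<open>c \<le> ?l\<close> unfolding beta_def
      by (cases "r < c") simp_all
  qed
qed

lemma card_gaps_below_beta:
  assumes sorted: "sorted_wrt (\<ge>) p" and i: "i < length p"
  shows "card {x. x < beta p i \<and> x \<notin> beta_set p} = p ! i"
proof -
  let ?l = "length p"
  have "x \<in> beta_set p \<longleftrightarrow> x \<in> beta p ` {i<..<?l}" if "x < beta p i" for x
  proof
    assume "x \<in> beta_set p"
    then obtain r where "r < ?l" "x = beta p r" unfolding beta_set_def by auto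
    moreover have "i < r"
      using beta_antimono[OF sorted _ i, of r] that \<open>x = beta p r\<close> by (meson leD not_less)
    ultimately show "x \<in> beta p ` {i<..<?l}" by auto
  qed (auto simp: beta_set_def)
  then have gaps: "{x. x < beta p i \<and> x \<notin> beta_set p} = {..<beta p i} - beta p ` {i<..<?l}"
    by auto
  have "beta p ` {i<..<?l} \<subseteq> {..<beta p i}" using beta_strict_antimono[OF sorted] by auto
  moreover have "inj_on (beta p) {i<..<?l}"
    by (rule inj_on_subset[OF inj_on_beta[OF sorted]]) auto
  then have "card (beta p ` {i<..<?l}) = ?l - 1 - i" by (simp add: card_image)
  ultimately show ?thesis
    unfolding gaps by (simp add: card_Diff_subset finite_subset beta_def)
qed

lemma beta_minus_hook_length_row:
  assumes sorted: "sorted_wrt (\<ge>) p" and i: "i < length p"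
  shows "(\<lambda>j. beta p i - hook_length p (i, j)) ` {..<p ! i} = {x. x < beta p i \<and> x \<notin> beta_set p}"
    (is "?f ` _ = ?G")
proof (rule card_subset_eq)
  show "?f ` {..<p ! i} \<subseteq> ?G"
    using hook_length_pos[OF i] beta_minus_hook_length_notin[OF sorted i] hook_length_le_beta[OF i]
    by fastforce
  have "inj_on ?f {..<p ! i}"
  proof (rule inj_onI)
    fix j1 j2 assume "j1 \<in> {..<p ! i}" "j2 \<in> {..<p ! i}" "?f j1 = ?f j2"
    then have "hook_length p (i, j1) = hook_length p (i, j2)"
      using hook_length_le_beta[OF i, of j1] hook_length_le_beta[OF i, of j2] by simp
    then show "j1 = j2"
      using inj_on_hook_length_row[OF i] \<open>j1 \<in> _\<close> \<open>j2 \<in> _\<close> by (auto dest: inj_onD)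
  qed
  then show "card (?f ` {..<p ! i}) = card ?G"
    using card_gaps_below_beta[OF sorted i] by (simp add: card_image)
qed simp

lemma hook_length_in_row_iff:
  assumes sorted: "sorted_wrt (\<ge>) p" and i: "i < length p" and k: "1 \<le> k"
  shows "(\<exists>j < p ! i. hook_length p (i, j) = k) \<longleftrightarrow> k \<le> beta p i \<and> beta p i - k \<notin> beta_set p"
proof -
  have "beta p i - k \<notin> beta_set p \<longleftrightarrow> (\<exists>j < p ! i. hook_length p (i, j) = k)"
    if "k \<le> beta p i"
  proof -
    have "beta p i - k \<notin> beta_set p \<longleftrightarrow>
        beta p i - k \<in> (\<lambda>j. beta p i - hook_length p (i, j)) ` {..<p ! i}"
      using beta_minus_hook_length_row[OF sorted i] k that by auto
    also have "\<dots> \<longleftrightarrow> (\<exists>j < p ! i. hook_length p (i, j) = k)"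
    proof -
      have "beta p i - k = beta p i - hook_length p (i, j) \<longleftrightarrow> hook_length p (i, j) = k"
        if "j < p ! i" for j
        using hook_length_le_beta[OF i that] \<open>k \<le> beta p i\<close> by linarith
      then show ?thesis by (auto simp: image_iff)
    qed
    finally show ?thesis .
  qed
  moreover have "k \<le> beta p i" if "j < p ! i" "hook_length p (i, j) = k" for j
    using hook_length_le_beta[OF i that(1)] that(2) by simp
  ultimately show ?thesis by blast
qed

lemma inj_on_fst_hook_length_eq: "inj_on fst {u \<in> young_cells p. hook_length p u = k}"
proof (rule inj_onI)
  fix u v assume "u \<in> {u \<in> young_cells p. hook_length p u = k}"
    "v \<in> {u \<in> young_cells p. hook_length p u = k}" "fst u = fst v"
  moreover obtain i j j' where "u = (i, j)" "v = (i, j')"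
    using \<open>fst u = fst v\<close> by (cases u, cases v) auto
  ultimately have "i < length p" "j < p ! i" "j' < p ! i"
    "hook_length p (i, j) = hook_length p (i, j')" by (auto simp: young_cells_def)
  then show "u = v"
    using inj_onD[OF inj_on_hook_length_row[of i p]] \<open>u = (i, j)\<close> \<open>v = (i, j')\<close> by simp
qed

lemma alpha_eq_movable:
  assumes sorted: "sorted_wrt (\<ge>) p" and k: "1 \<le> k"
  shows "alpha k p = movable k (beta_set p)"
proof -
  let ?H = "{u \<in> young_cells p. hook_length p u = k}"
  let ?I = "{i. i < length p \<and> k \<le> beta p i \<and> beta p i - k \<notin> beta_set p}"
  have "fst ` ?H = ?I"
  proof
    show "fst ` ?H \<subseteq> ?I"
    proof
      fix i assume "i \<in> fst ` ?H"
      then obtain j where "i < length p" "j < p ! i" "hook_length p (i, j) = k"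
        by (auto simp: young_cells_def)
      then show "i \<in> ?I" using hook_length_in_row_iff[OF sorted _ k, of i] by auto
    qed
    show "?I \<subseteq> fst ` ?H"
    proof
      fix i assume "i \<in> ?I"
      then obtain j where "j < p ! i" "hook_length p (i, j) = k"
        using hook_length_in_row_iff[OF sorted _ k, of i] by auto
      with \<open>i \<in> ?I\<close> show "i \<in> fst ` ?H"
        by (intro image_eqI[of _ _ "(i, j)"]) (auto simp: young_cells_def)
    qed
  qed
  then have "alpha k p = card ?I"
    unfolding alpha_def using card_image[OF inj_on_fst_hook_length_eq] by metis
  also have "\<dots> = card (beta p ` ?I)"
    by (rule card_image[symmetric], rule inj_on_subset[OF inj_on_beta[OF sorted]]) auto
  also have "beta p ` ?I = {y \<in> beta_set p. k \<le> y \<and> y - k \<notin> beta_set p}"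
    unfolding beta_set_def by auto
  finally show ?thesis unfolding movable_def .
qed

section \<open>The \<open>k\<close>-abacus\<close>

definition runner :: "nat \<Rightarrow> nat set \<Rightarrow> nat \<Rightarrow> nat set" where
  "runner k B i = {x. i + k * x \<in> B}"

definition abacus :: "nat \<Rightarrow> (nat \<Rightarrow> nat set) \<Rightarrow> nat set" where
  "abacus k R = (\<Union>i<k. (\<lambda>x. i + k * x) ` R i)"

lemma finite_runner:
  assumes "finite B" "1 \<le> k"
  shows "finite (runner k B i)"
proof -
  have "inj (\<lambda>x. i + k * x)" using assms(2) by (auto simp: inj_def)
  moreover have "runner k B i = (\<lambda>x. i + k * x) -` B" unfolding runner_def by auto
  ultimately show ?thesis using finite_vimageI[OF assms(1)] by simp
qed

lemma bij_betw_runners: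
  assumes "1 \<le> k"
  shows "bij_betw (\<lambda>(i, x). i + k * x) (SIGMA i:{..<k}. runner k B i) B"
proof (rule bij_betwI')
  fix u v assume "u \<in> (SIGMA i:{..<k}. runner k B i)" "v \<in> (SIGMA i:{..<k}. runner k B i)"
  then obtain i x i' x' where u: "u = (i, x)" "i < k" and v: "v = (i', x')" "i' < k" by auto
  have "i + k * x = i' + k * x' \<Longrightarrow> i = i'"
    using u(2) v(2) by (metis mod_mult_self2 mod_less)
  then show "((\<lambda>(i, x). i + k * x) u = (\<lambda>(i, x). i + k * x) v) = (u = v)"
    using u v assms by auto
next
  fix y assume "y \<in> B"
  then show "\<exists>u\<in>(SIGMA i:{..<k}. runner k B i). y = (\<lambda>(i, x). i + k * x) u"
    using assms by (intro bexI[of _ "(y mod k, y div k)"]) (auto simp: runner_def)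
qed (auto simp: runner_def)

lemma card_eq_sum_runners:
  assumes "finite B" "1 \<le> k"
  shows "card B = (\<Sum>i<k. card (runner k B i))"
proof -
  have "card B = card (SIGMA i:{..<k}. runner k B i)"
    using bij_betw_same_card[OF bij_betw_runners[OF assms(2)]] by simp
  then show ?thesis using finite_runner[OF assms] by (simp add: card_SigmaI)
qed

lemma sum_eq_sum_runners:
  assumes "finite B" "1 \<le> k"
  shows "\<Sum>B = (\<Sum>i<k. i * card (runner k B i) + k * \<Sum>(runner k B i))"
proof -
  have "\<Sum>B = (\<Sum>(i, x)\<in>(SIGMA i:{..<k}. runner k B i). i + k * x)"
    using sum.reindex_bij_betw[OF bij_betw_runners[OF assms(2)], of "\<lambda>y. y"] by simp
  also have "\<dots> = (\<Sum>i<k. \<Sum>x\<in>runner k B i. i + k * x)"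
    using finite_runner[OF assms] by (subst sum.Sigma) auto
  also have "\<dots> = (\<Sum>i<k. i * card (runner k B i) + k * \<Sum>(runner k B i))"
    by (rule sum.cong) (simp_all add: sum.distrib sum_distrib_left)
  finally show ?thesis .
qed

lemma movable_eq_sum_runners:
  assumes "finite B" "1 \<le> k"
  shows "movable k B = (\<Sum>i<k. movable 1 (runner k B i))"
proof -
  let ?f = "\<lambda>(i, x). i + k * x"
  let ?S = "SIGMA i:{..<k}. {x \<in> runner k B i. 1 \<le> x \<and> x - 1 \<notin> runner k B i}"
  have step_down: "i + k * x - k = i + k * (x - 1)" if "1 \<le> x" for i x :: nat
    using that by (cases x) auto
  have "{y \<in> B. k \<le> y \<and> y - k \<notin> B} = ?f ` ?S"
  proof
    show "{y \<in> B. k \<le> y \<and> y - k \<notin> B} \<subseteq> ?f ` ?S"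
    proof
      fix y assume y: "y \<in> {y \<in> B. k \<le> y \<and> y - k \<notin> B}"
      have "y = y mod k + k * (y div k)" "y mod k < k" using assms(2) by simp_all
      moreover have "1 \<le> y div k" using y assms(2) div_le_mono[of k y k] by simp
      ultimately have "(y mod k, y div k) \<in> ?S"
        using y step_down[of "y div k" "y mod k"] by (auto simp: runner_def)
      then show "y \<in> ?f ` ?S" by (rule image_eqI[rotated]) simp
    qed
    show "?f ` ?S \<subseteq> {y \<in> B. k \<le> y \<and> y - k \<notin> B}"
    proof
      fix y assume "y \<in> ?f ` ?S"
      then obtain i x where "x \<in> runner k B i" "1 \<le> x" "x - 1 \<notin> runner k B i" "y = i + k * x"
        by auto
      moreover have "k \<le> i + k * x" using \<open>1 \<le> x\<close> by (cases x) auto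
      ultimately show "y \<in> {y \<in> B. k \<le> y \<and> y - k \<notin> B}"
        using step_down[OF \<open>1 \<le> x\<close>, of i] by (simp add: runner_def)
    qed
  qed
  moreover have "inj_on ?f ?S"
    using bij_betw_imp_inj_on[OF bij_betw_runners[OF assms(2)]] by (rule inj_on_subset) auto
  ultimately have "movable k B = card ?S" unfolding movable_def by (simp add: card_image)
  also have "\<dots> = (\<Sum>i<k. movable 1 (runner k B i))"
    using finite_runner[OF assms] by (simp add: card_SigmaI movable_def)
  finally show ?thesis .
qed

lemma runner_abacus:
  assumes "1 \<le> k" "i < k"
  shows "runner k (abacus k R) i = R i"
proof -
  have "i + k * x = i' + k * x' \<longleftrightarrow> i = i' \<and> x = x'" if "i' < k" for x i' x'
    using assms that by (metis mod_mult_self2 mod_less add_left_cancel mult_cancel_left not_one_le_zero)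
  then show ?thesis using assms(2) unfolding runner_def abacus_def by auto
qed

lemma finite_abacus: "(\<And>i. i < k \<Longrightarrow> finite (R i)) \<Longrightarrow> finite (abacus k R)"
  unfolding abacus_def by auto

section \<open>The upper bound\<close>

lemma movable_one_add_card_le:
  assumes "finite U" "U \<noteq> {}"
  shows "movable 1 U + card U \<le> Max U + 1"
proof -
  let ?M = "Max U"
  let ?D = "{x \<in> U. 1 \<le> x \<and> x - 1 \<notin> U}"
  have "(\<lambda>x. x - 1) ` ?D \<subseteq> {..<?M} - U"
  proof
    fix z assume "z \<in> (\<lambda>x. x - 1) ` ?D"
    then obtain x where "x \<in> U" "1 \<le> x" "x - 1 \<notin> U" "z = x - 1" by auto
    moreover have "x \<le> ?M" using \<open>x \<in> U\<close> assms by simp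
    ultimately show "z \<in> {..<?M} - U" by auto
  qed
  moreover have "inj_on (\<lambda>x. x - 1) ?D" by (auto simp: inj_on_def)
  ultimately have "card ?D \<le> card ({..<?M} - U)"
    by (intro card_inj_on_le) auto
  also have "{..<?M} - U = {..<?M} - (U - {?M})" by blast
  also have "card \<dots> = ?M - card (U - {?M})"
  proof -
    have "U - {?M} \<subseteq> {..<?M}"
    proof
      fix x assume "x \<in> U - {?M}"
      then show "x \<in> {..<?M}" using Max_ge[OF assms(1), of x] by auto
    qed
    then show ?thesis using assms by (simp add: card_Diff_subset finite_subset)
  qed
  also have "card (U - {?M}) = card U - 1" using assms by simp
  finally have "card ?D \<le> ?M - (card U - 1)" .
  moreover have "U \<subseteq> {..?M}" using assms by auto
  then have "card U \<le> ?M + 1" using card_mono[of "{..?M}" U] by simp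
  ultimately show ?thesis unfolding movable_def by linarith
qed

lemma movable_one_remove_Max:
  assumes "finite U" "U \<noteq> {}"
  shows "movable 1 U \<le> movable 1 (U - {Max U}) + 1"
proof -
  let ?U' = "U - {Max U}"
  have "{x \<in> U. 1 \<le> x \<and> x - 1 \<notin> U} \<subseteq> insert (Max U) {x \<in> ?U'. 1 \<le> x \<and> x - 1 \<notin> ?U'}"
    by auto
  then have "movable 1 U \<le> card (insert (Max U) {x \<in> ?U'. 1 \<le> x \<and> x - 1 \<notin> ?U'})"
    unfolding movable_def using assms(1) by (intro card_mono) auto
  also have "\<dots> \<le> movable 1 ?U' + 1"
    unfolding movable_def using assms(1) by (simp add: card_insert_if)
  finally show ?thesis .
qed

text \<open>Induction removing the largest element \<open>M\<close>: it adds \<open>M\<close> to the sum, while the bound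
  \<open>movable_one_add_card_le\<close> caps by \<open>M\<close> the growth of the left-hand side.\<close>
lemma double_sum_ge_movable_one:
  assumes "finite U"
  shows "movable 1 U * (movable 1 U + 1) + card U * (card U - 1) \<le> 2 * \<Sum>U"
  using assms
proof (induction "card U" arbitrary: U)
  case 0
  then show ?case by (simp add: movable_def)
next
  case (Suc n)
  then have "U \<noteq> {}" by auto
  define M where "M = Max U"
  define U' where "U' = U - {M}"
  have "M \<in> U" using Suc \<open>U \<noteq> {}\<close> unfolding M_def by simp
  then have "card U' = n" "\<Sum>U = \<Sum>U' + M"
    using Suc unfolding U'_def by (simp_all add: sum.remove)
  then have IH: "movable 1 U' * (movable 1 U' + 1) + n * (n - 1) \<le> 2 * \<Sum>U'"
    using Suc(1)[of U'] Suc(3) unfolding U'_def by simp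
  define d where "d = movable 1 U"
  define d' where "d' = movable 1 U'"
  have grow: "d + Suc n \<le> M + 1"
    using movable_one_add_card_le[OF Suc(3) \<open>U \<noteq> {}\<close>] Suc(2) unfolding M_def d_def by simp
  have step: "d \<le> d' + 1"
    using movable_one_remove_Max[OF Suc(3) \<open>U \<noteq> {}\<close>] unfolding d_def d'_def U'_def M_def .
  have pairs: "Suc n * (Suc n - 1) = n * (n - 1) + 2 * n" by (cases n) auto
  have "d * (d + 1) + Suc n * (Suc n - 1) \<le> 2 * \<Sum>U"
  proof (cases "d \<le> d'")
    case True
    then have "d * (d + 1) \<le> d' * (d' + 1)" by (intro mult_mono) auto
    then show ?thesis using IH grow pairs \<open>\<Sum>U = \<Sum>U' + M\<close> unfolding d'_def by linarith
  next
    case False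
    with step have "d = d' + 1" by simp
    then have "d * (d + 1) = d' * (d' + 1) + 2 * d" by simp
    then show ?thesis using IH grow pairs \<open>\<Sum>U = \<Sum>U' + M\<close> unfolding d'_def by linarith
  qed
  then show ?case using Suc(2) unfolding d_def by simp
qed

text \<open>Induction on \<open>K\<close>: the step reduces to \<open>\<Sum>i<K. (x i - x K) * (x i - x K - 1) \<ge> 0\<close>, a sum
  of products of consecutive integers.\<close>
lemma sum_mult_sum_pred_le:
  fixes x :: "nat \<Rightarrow> int"
  shows "(\<Sum>i<K. x i) * ((\<Sum>i<K. x i) - 1)
     \<le> (\<Sum>i<K. 2 * int i * x i) + int K * (\<Sum>i<K. x i * (x i - 1))"
proof (induction K)
  case 0
  then show ?case by simp
next
  case (Suc K)
  define S1 where "S1 = (\<Sum>i<K. x i)"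
  define S2 where "S2 = (\<Sum>i<K. x i * x i)"
  define S3 where "S3 = (\<Sum>i<K. 2 * int i * x i)"
  define y where "y = x K"
  have e2: "(\<Sum>i<K. x i * (x i - 1)) = S2 - S1"
    unfolding S1_def S2_def by (simp add: algebra_simps sum_subtractf)
  have nonneg: "0 \<le> (\<Sum>i<K. (x i - y) * (x i - y) - (x i - y))"
  proof (rule sum_nonneg)
    fix i
    have "0 \<le> (x i - y) * (x i - y - 1)"
      by (cases "x i - y \<le> 0") (auto intro: mult_nonpos_nonpos)
    then show "0 \<le> (x i - y) * (x i - y) - (x i - y)" by (simp add: algebra_simps)
  qed
  have ex: "(\<Sum>i<K. (x i - y) * (x i - y) - (x i - y)) = S2 - 2 * y * S1 + int K * y * y - S1 + int K * y"
    unfolding S1_def S2_def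
    by (simp add: algebra_simps sum.distrib sum_subtractf sum_distrib_left)
  have IH: "S1 * (S1 - 1) \<le> S3 + int K * (S2 - S1)" using Suc e2 unfolding S1_def S3_def by simp
  have A1: "(\<Sum>i<Suc K. x i) * ((\<Sum>i<Suc K. x i) - 1) = (S1 + y) * (S1 + y - 1)"
    unfolding S1_def y_def by simp
  have A2: "(\<Sum>i<Suc K. 2 * int i * x i) = S3 + 2 * int K * y" unfolding S3_def y_def by simp
  have A3: "(\<Sum>i<Suc K. x i * (x i - 1)) = S2 - S1 + y * (y - 1)" using e2 unfolding y_def by simp
  have A4: "S3 + 2 * int K * y + int (Suc K) * (S2 - S1 + y * (y - 1)) - (S1 + y) * (S1 + y - 1)
     = (S3 + int K * (S2 - S1) - S1 * (S1 - 1)) + (S2 - 2 * y * S1 + int K * y * y - S1 + int K * y)"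
    by (simp add: algebra_simps)
  show ?case unfolding A1 A2 A3 using A4 IH nonneg ex by linarith
qed

lemma pronic_ge_tangent:
  fixes d q :: int
  shows "2 * (q + 1) * d - q * (q + 1) \<le> d * (d + 1)"
proof -
  have "0 \<le> (d - q) * (d - q - 1)"
    by (cases "d - q \<le> 0") (auto intro: mult_nonpos_nonpos)
  then show ?thesis by (simp add: algebra_simps)
qed

lemma double_sum_ge_movable:
  assumes B: "finite B" and k: "1 \<le> k"
  shows "int k * (2 * int (q + 1) * int (movable k B) - int k * int q * int (q + 1))
     \<le> 2 * int (\<Sum>B) - int (card B) * (int (card B) - 1)"
proof -
  define n where "n i = card (runner k B i)" for i
  define s where "s i = \<Sum>(runner k B i)" for i
  define d where "d i = movable 1 (runner k B i)" for i
  have card_B: "int (card B) = (\<Sum>i<k. int (n i))" using card_eq_sum_runners[OF B k] unfolding n_def by simp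
  have sum_B: "int (\<Sum>B) = (\<Sum>i<k. int i * int (n i) + int k * int (s i))"
    using sum_eq_sum_runners[OF B k] unfolding n_def s_def by simp
  have movable_B: "int (movable k B) = (\<Sum>i<k. int (d i))" using movable_eq_sum_runners[OF B k] unfolding d_def by simp
  have convexity: "(\<Sum>i<k. int (n i)) * ((\<Sum>i<k. int (n i)) - 1)
     \<le> (\<Sum>i<k. 2 * int i * int (n i)) + int k * (\<Sum>i<k. int (n i) * (int (n i) - 1))"
    by (rule sum_mult_sum_pred_le)
  have runner_bound: "int (d i) * (int (d i) + 1) + int (n i) * (int (n i) - 1) \<le> 2 * int (s i)" for i
  proof -
    have "int (d i * (d i + 1) + n i * (n i - 1)) \<le> int (2 * s i)"
      using double_sum_ge_movable_one[OF finite_runner[OF B k, of i]] unfolding d_def n_def s_def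
      by (simp only: of_nat_le_iff)
    then show ?thesis unfolding of_nat_add of_nat_mult_pred by (simp add: algebra_simps)
  qed
  have "int k * (2 * int (q + 1) * int (movable k B) - int k * int q * int (q + 1))
      = int k * (\<Sum>i<k. 2 * int (q + 1) * int (d i) - int q * int (q + 1))"
    unfolding movable_B by (simp add: sum_subtractf sum_distrib_left)
  also have "\<dots> \<le> int k * (\<Sum>i<k. int (d i) * (int (d i) + 1))"
  proof -
    have tangent: "2 * int (q + 1) * int (d i) - int q * int (q + 1) \<le> int (d i) * (int (d i) + 1)" for i
      using pronic_ge_tangent[of "int q" "int (d i)"] by (simp add: algebra_simps)
    show ?thesis by (intro mult_left_mono sum_mono tangent) auto
  qed
  also have "\<dots> \<le> int k * (\<Sum>i<k. 2 * int (s i) - int (n i) * (int (n i) - 1))"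
    using runner_bound by (intro mult_left_mono sum_mono) (auto simp: algebra_simps)
  also have "\<dots> = 2 * (\<Sum>i<k. int i * int (n i) + int k * int (s i))
       - ((\<Sum>i<k. 2 * int i * int (n i)) + int k * (\<Sum>i<k. int (n i) * (int (n i) - 1)))"
    by (simp add: sum_subtractf sum.distrib sum_distrib_left algebra_simps)
  also have "\<dots> \<le> 2 * int (\<Sum>B) - int (card B) * (int (card B) - 1)"
    using convexity unfolding sum_B card_B by linarith
  finally show ?thesis .
qed

lemma double_choose_two: "2 * (n choose 2) = n * (n - 1)"
  by (cases n) (simp_all add: choose_two)

lemma double_size_ge_alpha:
  assumes p: "is_partition p" and k: "1 \<le> k"
  shows "int k * (2 * int (q + 1) * int (alpha k p) - int k * int q * int (q + 1)) \<le> 2 * int (sum_list p)"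
proof -
  have sorted: "sorted_wrt (\<ge>) p" using p unfolding is_partition_def by simp
  have "finite (beta_set p)" unfolding beta_set_def by simp
  from double_sum_ge_movable[OF this k, of q] show ?thesis
    unfolding double_size_eq_beta_set[OF sorted, symmetric] alpha_eq_movable[OF sorted k] .
qed

lemma double_t:
  "2 * t s k = 2 * int s * (int (s div k) + 1) * int k - int (s div k + 1) * int (s div k) * int k ^ 2"
proof -
  have "int (2 * ((s div k + 1) choose 2)) = int ((s div k + 1) * (s div k))"
    using double_choose_two[of "s div k + 1"] by simp
  then have "2 * int ((s div k + 1) choose 2) = int (s div k + 1) * int (s div k)"
    by (simp only: of_nat_mult of_nat_numeral)
  moreover have "2 * t s k = 2 * int s * (int (s div k) + 1) * int k - (2 * int ((s div k + 1) choose 2)) * int k ^ 2"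
    unfolding t_def by (simp add: algebra_simps)
  ultimately show ?thesis by simp
qed

lemma alpha_le:
  assumes p: "is_partition p" and k: "1 \<le> k" and n: "int (sum_list p) \<le> t (m + 1) k - 1"
  shows "alpha k p \<le> m"
proof (rule ccontr)
  assume "\<not> alpha k p \<le> m"
  then have am: "m + 1 \<le> alpha k p" by simp
  define q where "q = (m + 1) div k"
  have size: "int k * (2 * int (q + 1) * int (alpha k p) - int k * int q * int (q + 1)) \<le> 2 * int (sum_list p)"
    by (rule double_size_ge_alpha[OF p k])
  have "int k * (2 * int (q + 1) * int (m + 1)) \<le> int k * (2 * int (q + 1) * int (alpha k p))"
    using am by (intro mult_left_mono) auto
  moreover have "2 * t (m + 1) k = int k * (2 * int (q + 1) * int (m + 1)) - int k * (int k * int q * int (q + 1))"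
    unfolding double_t q_def by (simp add: algebra_simps power2_eq_square)
  ultimately show False using size n by (simp add: algebra_simps)
qed

section \<open>The lower bound\<close>

lemma sorted_gt_nth_gap:
  fixes xs :: "nat list"
  assumes "sorted_wrt (>) xs" "i \<le> j" "j < length xs"
  shows "xs ! j + (j - i) \<le> xs ! i"
  using assms(2,3)
proof (induction j)
  case (Suc j)
  show ?case
  proof (cases "i = Suc j")
    case False
    then have "xs ! j + (j - i) \<le> xs ! i" using Suc by simp
    moreover have "xs ! Suc j < xs ! j" using assms(1) Suc(3) by (auto simp: sorted_wrt_iff_nth_less)
    ultimately show ?thesis using False Suc(2) by linarith
  qed simp
qed simp

lemma beta_set_of_finite:
  assumes "finite B"
  obtains p where "sorted_wrt (\<ge>) p" "beta_set p = B"
proof -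
  define xs where "xs = rev (sorted_list_of_set B)"
  define l where "l = length xs"
  have desc: "sorted_wrt (>) xs" unfolding xs_def by (simp add: sorted_wrt_rev)
  define p where "p = map (\<lambda>i. xs ! i - (l - 1 - i)) [0..<l]"
  have above: "l - 1 - i \<le> xs ! i" if "i < l" for i
    using sorted_gt_nth_gap[OF desc, of i "l - 1"] that unfolding l_def by fastforce
  have "sorted_wrt (\<ge>) p"
    unfolding sorted_wrt_iff_nth_less
  proof (intro allI impI)
    fix i j assume "i < j" "j < length p"
    then show "p ! j \<le> p ! i"
      using sorted_gt_nth_gap[OF desc, of i j] above[of i] above[of j]
      unfolding p_def l_def by simp
  qed
  moreover have "beta_set p = B"
  proof -
    have "beta p i = xs ! i" if "i < l" for i
      using above[OF that] that unfolding beta_def p_def by simp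
    then have "beta_set p = (!) xs ` {..<l}" unfolding beta_set_def p_def by simp
    also have "\<dots> = set xs" unfolding l_def by (auto simp: set_conv_nth)
    finally show ?thesis using assms unfolding xs_def by simp
  qed
  ultimately show ?thesis using that by blast
qed

lemma young_cells_append_zeros:
  assumes "\<forall>z\<in>set zs. z = 0"
  shows "young_cells (xs @ zs) = young_cells xs"
proof -
  have "(i < length (xs @ zs) \<and> j < (xs @ zs) ! i) \<longleftrightarrow> (i < length xs \<and> j < xs ! i)" for i j
  proof (cases "i < length xs")
    case True then show ?thesis by (simp add: nth_append)
  next
    case False
    show ?thesis
    proof (cases "i < length (xs @ zs)")
      case True
      then have "i - length xs < length zs" using False by simp
      then have "zs ! (i - length xs) = 0" using assms nth_mem by blast
      then show ?thesis using False by (simp add: nth_append)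
    qed (use False in simp)
  qed
  then show ?thesis unfolding young_cells_def by auto
qed

lemma alpha_eq_if_young_cells_eq:
  assumes "young_cells p = young_cells p'"
  shows "alpha k p = alpha k p'"
proof -
  have "hook_length p u = hook_length p' u" for u unfolding hook_length_def assms ..
  then show ?thesis unfolding alpha_def assms by simp
qed

lemma partition_of_sorted:
  assumes s: "sorted_wrt (\<ge>) (p :: nat list)"
  shows "\<exists>p'. is_partition p' \<and> sum_list p' = sum_list p \<and> alpha k p' = alpha k p"
proof -
  define tw where "tw = takeWhile (\<lambda>x. 0 < x) p"
  define dw where "dw = dropWhile (\<lambda>x. 0 < x) p"
  have pe: "p = tw @ dw" unfolding tw_def dw_def by simp
  have zs: "\<forall>z\<in>set dw. z = 0"
  proof (cases dw)
    case Nil then show ?thesis by simp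
  next
    case (Cons z zs)
    have "\<not> 0 < hd dw" using hd_dropWhile[of "\<lambda>x. 0 < x" p] Cons unfolding dw_def by simp
    then have z0: "z = 0" using Cons by simp
    have "sorted_wrt (\<ge>) (tw @ dw)" using s pe by simp
    then have "sorted_wrt (\<ge>) (z # zs)" using Cons by (simp only: sorted_wrt_append)
    then show ?thesis using Cons z0 by auto
  qed
  have ptw: "is_partition tw" unfolding is_partition_def
  proof
    have "sorted_wrt (\<ge>) (tw @ dw)" using s pe by simp
    then show "sorted_wrt (\<ge>) tw" by (simp only: sorted_wrt_append)
    show "\<forall>x\<in>set tw. 0 < x" unfolding tw_def by (auto dest: set_takeWhileD)
  qed
  have "sum_list dw = 0" using zs by (induction dw) auto
  moreover have "sum_list p = sum_list tw + sum_list dw" by (subst pe) simp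
  ultimately have "sum_list tw = sum_list p" by simp
  moreover have "alpha k tw = alpha k p"
    using alpha_eq_if_young_cells_eq[OF young_cells_append_zeros[OF zs, of tw]] pe by simp
  ultimately show ?thesis using ptw by blast
qed

text \<open>Every
  bead except the one at \<open>0\<close> has an empty slot above it.\<close>
definition sparse_bead :: "nat \<Rightarrow> bool \<Rightarrow> nat \<Rightarrow> nat \<Rightarrow> nat" where
  "sparse_bead d z a s = 2 * s + 1 + of_bool z + (if Suc s = d then a else 0)"

definition sparse_runner :: "nat \<Rightarrow> bool \<Rightarrow> nat \<Rightarrow> nat set" where
  "sparse_runner d z a = sparse_bead d z a ` {..<d} \<union> (if z then {0} else {})"

lemma sparse_bead_strict_mono:
  "s < s' \<Longrightarrow> s' < d \<Longrightarrow> sparse_bead d z a s < sparse_bead d z a s'"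
  unfolding sparse_bead_def by auto

lemma inj_on_sparse_bead: "inj_on (sparse_bead d z a) {..<d}"
proof (rule inj_onI)
  fix s s' assume "s \<in> {..<d}" "s' \<in> {..<d}" "sparse_bead d z a s = sparse_bead d z a s'"
  then show "s = s'"
    using sparse_bead_strict_mono[of s s' d z a] sparse_bead_strict_mono[of s' s d z a]
    by (cases s s' rule: linorder_cases) auto
qed

lemma finite_sparse_runner: "finite (sparse_runner d z a)"
  unfolding sparse_runner_def by auto

lemma card_sparse_runner: "card (sparse_runner d z a) = d + of_bool z"
proof -
  have "0 \<notin> sparse_bead d z a ` {..<d}" by (auto simp: sparse_bead_def)
  then show ?thesis
    unfolding sparse_runner_def using inj_on_sparse_bead[of d z a]
    by (auto simp: card_image card_insert_if)
qed

lemma sum_sparse_runner: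
  "\<Sum>(sparse_runner d z a) = d * d + of_bool z * d + (if 0 < d then a else 0)"
proof -
  have "\<Sum>(sparse_runner d z a) = (\<Sum>s<d. sparse_bead d z a s)"
    unfolding sparse_runner_def by (auto simp: sum.insert_if sum.reindex[OF inj_on_sparse_bead])
  also have "\<dots> = (\<Sum>s<d. 2 * s + 1) + (\<Sum>s<d. of_bool z) + (\<Sum>s<d. if Suc s = d then a else 0)"
    unfolding sparse_bead_def by (simp only: sum.distrib)
  also have "(\<Sum>s<d. 2 * s + 1) = d * d"
    by (induction d) auto
  also have "(\<Sum>s<d. if Suc s = d then a else 0) = (if 0 < d then a else 0)"
    by (cases d) (simp_all add: sum.If_cases lessThan_Suc)
  finally show ?thesis by (simp add: mult.commute)
qed

lemma movable_sparse_runner: "d \<le> movable 1 (sparse_runner d z a)"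
proof -
  let ?f = "sparse_bead d z a"
  let ?R = "sparse_runner d z a"
  have "?f s - 1 \<notin> ?R" if "s < d" for s
  proof
    assume "?f s - 1 \<in> ?R"
    then consider "?f s - 1 = 0" "z" | s' where "s' < d" "?f s - 1 = ?f s'"
      unfolding sparse_runner_def by (auto split: if_splits)
    then show False
    proof cases
      case 1
      then show False by (simp add: sparse_bead_def)
    next
      case 2
      then have "s' < s"
        using sparse_bead_strict_mono[of s s' d z a] \<open>s < d\<close>
        by (cases s s' rule: linorder_cases) (auto simp: sparse_bead_def)
      then show False using 2 \<open>s < d\<close> by (auto simp: sparse_bead_def)
    qed
  qed
  moreover have "?f s \<in> ?R" "1 \<le> ?f s" if "s < d" for s
    using that unfolding sparse_runner_def sparse_bead_def by auto
  ultimately have "?f ` {..<d} \<subseteq> {y \<in> ?R. 1 \<le> y \<and> y - 1 \<notin> ?R}"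
    by auto
  then have "card (?f ` {..<d}) \<le> movable 1 ?R"
    unfolding movable_def by (rule card_mono[OF finite_subset[OF _ finite_sparse_runner], rotated]) auto
  then show ?thesis using card_image[OF inj_on_sparse_bead] by simp
qed

lemma card_abacus:
  assumes "1 \<le> k" "\<And>i. i < k \<Longrightarrow> finite (R i)"
  shows "card (abacus k R) = (\<Sum>i<k. card (R i))"
  using card_eq_sum_runners[OF finite_abacus[OF assms(2)] assms(1)] runner_abacus[OF assms(1)]
  by simp

lemma sum_abacus:
  assumes "1 \<le> k" "\<And>i. i < k \<Longrightarrow> finite (R i)"
  shows "\<Sum>(abacus k R) = (\<Sum>i<k. i * card (R i) + k * \<Sum>(R i))"
  using sum_eq_sum_runners[OF finite_abacus[OF assms(2)] assms(1)] runner_abacus[OF assms(1)]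
  by simp

lemma movable_abacus:
  assumes "1 \<le> k" "\<And>i. i < k \<Longrightarrow> finite (R i)"
  shows "movable k (abacus k R) = (\<Sum>i<k. movable 1 (R i))"
  using movable_eq_sum_runners[OF finite_abacus[OF assms(2)] assms(1)] runner_abacus[OF assms(1)]
  by simp

definition balanced_abacus :: "nat \<Rightarrow> nat \<Rightarrow> nat \<Rightarrow> nat \<Rightarrow> nat \<Rightarrow> nat set" where
  "balanced_abacus k q r j a =
    abacus k (\<lambda>i. sparse_runner (q + (if i < r then 1 else 0)) (i = j) (if i = 0 then a else 0))"

lemma sum_if_less:
  fixes r k :: nat
  assumes "r \<le> k"
  shows "(\<Sum>i<k. if i < r then f i else 0) = (\<Sum>i<r. f i :: 'a :: comm_monoid_add)"
proof -
  have "(\<Sum>i<k. if i < r then f i else 0) = sum f {i \<in> {..<k}. i < r}"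
    using sum.inter_filter[OF finite_lessThan[of k], of f "\<lambda>i. i < r"] by simp
  also have "{i \<in> {..<k}. i < r} = {..<r}" using assms by auto
  finally show ?thesis .
qed

lemma card_balanced_abacus:
  assumes "1 \<le> k" "r \<le> k" "j < k"
  shows "card (balanced_abacus k q r j a) = q * k + r + 1"
proof -
  have "card (balanced_abacus k q r j a) = (\<Sum>i<k. q + (if i < r then 1 else 0) + of_bool (i = j))"
    unfolding balanced_abacus_def
    by (simp add: card_abacus[OF assms(1)] finite_sparse_runner card_sparse_runner)
  also have "\<dots> = q * k + r + 1"
    using sum_if_less[OF assms(2), of "\<lambda>_. 1 :: nat"] assms(3) by (simp add: sum.distrib)
  finally show ?thesis .
qed

lemma movable_balanced_abacus:
  assumes "1 \<le> k" "r \<le> k"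
  shows "q * k + r \<le> movable k (balanced_abacus k q r j a)"
proof -
  have "q * k + r = (\<Sum>i<k. q + (if i < r then 1 else 0))"
    using sum_if_less[OF assms(2), of "\<lambda>_. 1 :: nat"] by (simp add: sum.distrib)
  also have "\<dots> \<le> movable k (balanced_abacus k q r j a)"
    unfolding balanced_abacus_def movable_abacus[OF assms(1) finite_sparse_runner]
    by (intro sum_mono order.trans[OF _ movable_sparse_runner]) simp
  finally show ?thesis .
qed

lemma sum_balanced_abacus:
  assumes "1 \<le> k" "r \<le> k" "j < k" "0 < q \<or> 0 < r"
  shows "\<Sum>(balanced_abacus k q r j a) = q * (\<Sum>i<k. i) + (\<Sum>i<r. i) + j
    + k * (k * q * q + r * (2 * q + 1) + (q + (if j < r then 1 else 0)) + a)"
proof -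
  define D where "D i = q + (if i < r then 1 else 0)" for i
  have "\<Sum>(balanced_abacus k q r j a) = (\<Sum>i<k. i * (D i + of_bool (i = j))
      + k * (D i * D i + of_bool (i = j) * D i + (if 0 < D i then if i = 0 then a else 0 else 0)))"
    unfolding balanced_abacus_def D_def
    by (simp add: sum_abacus[OF assms(1)] finite_sparse_runner card_sparse_runner sum_sparse_runner)
  also have "\<dots> = (\<Sum>i<k. i * D i) + (\<Sum>i<k. i * of_bool (i = j)) + k * ((\<Sum>i<k. D i * D i)
      + (\<Sum>i<k. of_bool (i = j) * D i) + (\<Sum>i<k. if 0 < D i then if i = 0 then a else 0 else 0))"
    by (simp only: sum.distrib sum_distrib_left[symmetric] add_mult_distrib2)
  also have "(\<Sum>i<k. i * D i) = q * (\<Sum>i<k. i) + (\<Sum>i<r. i)"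
  proof -
    have "(\<Sum>i<k. i * D i) = (\<Sum>i<k. q * i + (if i < r then i else 0))"
      unfolding D_def by (intro sum.cong) auto
    then show ?thesis using sum_if_less[OF assms(2), of "\<lambda>i. i"] by (simp add: sum.distrib sum_distrib_left)
  qed
  also have "(\<Sum>i<k. D i * D i) = k * q * q + r * (2 * q + 1)"
  proof -
    have "(\<Sum>i<k. D i * D i) = (\<Sum>i<k. q * q + (if i < r then 2 * q + 1 else 0))"
      unfolding D_def by (intro sum.cong) auto
    then show ?thesis using sum_if_less[OF assms(2), of "\<lambda>_. 2 * q + 1"] by (simp add: sum.distrib)
  qed
  also have "(\<Sum>i<k. if 0 < D i then if i = 0 then a else 0 else 0) = (\<Sum>i<k. if i = 0 then a else 0)"
    using assms(4) unfolding D_def by (intro sum.cong) auto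
  also have "\<dots> = a" using assms(1) by simp
  finally show ?thesis using assms(3) unfolding D_def by (simp add: sum.delta mult.commute)
qed

lemma double_sum_balanced_abacus:
  fixes k q r c a :: nat
  assumes k: "1 \<le> k" and r: "r < k" and c: "c < k" and nonempty: "0 < q \<or> 0 < r"
  defines "B \<equiv> balanced_abacus k q r ((c + r) mod k) a"
  shows "2 * int (\<Sum>B) - int (card B) * (int (card B) - 1) = 2 * (t (q * k + r) k + int (k * a + c))"
proof -
  define j where "j = (c + r) mod k"
  have "j < k" unfolding j_def using k by simp
  have carry: "int j + int k * int (q + (if j < r then 1 else 0)) = int c + int r + int k * int q"
  proof (cases "c + r < k")
    case True
    then show ?thesis unfolding j_def by simp
  next
    case False
    then have j: "j = c + r - k" unfolding j_def using c r by (simp add: mod_if)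
    then have "j < r" using c False by linarith
    with j show ?thesis using False by (simp add: algebra_simps)
  qed
  have card: "card B = q * k + r + 1"
    unfolding B_def using card_balanced_abacus[OF k less_imp_le[OF r] \<open>j < k\<close>] j_def by simp
  have sum: "\<Sum>B = q * (\<Sum>i<k. i) + (\<Sum>i<r. i) + j
      + k * (k * q * q + r * (2 * q + 1) + (q + (if j < r then 1 else 0)) + a)"
    unfolding B_def j_def[symmetric] by (rule sum_balanced_abacus[OF k less_imp_le[OF r] \<open>j < k\<close> nonempty])
  have gauss: "2 * int (\<Sum>i<n. i) = int n * (int n - 1)" for n
  proof -
    have "int (2 * (\<Sum>i<n. i)) = int (n * (n - 1))" by (simp only: double_sum_lessThan)
    then show ?thesis unfolding of_nat_mult_pred by simp
  qed
  have "2 * int (\<Sum>B) = int q * (2 * int (\<Sum>i<k. i)) + 2 * int (\<Sum>i<r. i)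
      + 2 * (int j + int k * int (q + (if j < r then 1 else 0)))
      + 2 * int k * (int k * int q * int q + int r * (2 * int q + 1) + int a)"
    unfolding sum by (simp add: algebra_simps del: of_nat_sum)
  also have "\<dots> = int q * (int k * (int k - 1)) + int r * (int r - 1) + 2 * (int c + int r + int k * int q)
      + 2 * int k * (int k * int q * int q + int r * (2 * int q + 1) + int a)"
    unfolding gauss carry ..
  finally have "2 * int (\<Sum>B) - int (card B) * (int (card B) - 1)
      = int q * (int k * (int k - 1)) + int r * (int r - 1) + 2 * (int c + int r + int k * int q)
      + 2 * int k * (int k * int q * int q + int r * (2 * int q + 1) + int a)
      - (int q * int k + int r + 1) * (int q * int k + int r)"
    unfolding card by simp
  also have "\<dots> = 2 * int (q * k + r) * (int q + 1) * int k - (int q + 1) * int q * int k ^ 2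
      + 2 * int (k * a + c)"
    by (simp add: algebra_simps power2_eq_square)
  also have "\<dots> = 2 * (t (q * k + r) k + int (k * a + c))"
    using double_t[of "q * k + r" k] r by simp
  finally show ?thesis .
qed

lemma replicate_one_in_partitions: "replicate n 1 \<in> partitions n"
  unfolding partitions_def is_partition_def
  by (auto simp: sorted_wrt_iff_nth_less sum_list_replicate)

lemma exists_partition_alpha_ge:
  assumes k: "1 \<le> k" and n: "t m k \<le> int n"
  shows "\<exists>p \<in> partitions n. m \<le> alpha k p"
proof (cases "m = 0")
  case True
  then show ?thesis using replicate_one_in_partitions by blast
next
  case False
  define q where "q = m div k"
  define r where "r = m mod k"
  define e where "e = nat (int n - t m k)"
  define B where "B = balanced_abacus k q r ((e mod k + r) mod k) (e div k)"
  have m: "m = q * k + r" "r < k" "0 < q \<or> 0 < r"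
    using k False unfolding q_def r_def by auto
  have "finite B"
    unfolding B_def balanced_abacus_def by (rule finite_abacus[OF finite_sparse_runner])
  then obtain p where sorted: "sorted_wrt (\<ge>) p" and p: "beta_set p = B"
    by (rule beta_set_of_finite)
  have "int n = t m k + int (k * (e div k) + e mod k)"
    using n unfolding e_def by simp
  then have "2 * int (\<Sum>B) - int (card B) * (int (card B) - 1) = 2 * int n"
    using double_sum_balanced_abacus[OF k m(2) _ m(3), of "e mod k" "e div k"] k m(1)
    unfolding B_def by simp
  then have "sum_list p = n"
    using double_size_eq_beta_set[OF sorted] unfolding p by simp
  moreover have "m \<le> alpha k p"
    using alpha_eq_movable[OF sorted k] movable_balanced_abacus[OF k less_imp_le[OF m(2)]] p m(1)
    unfolding B_def by simp
  moreover obtain p' where "is_partition p'" "sum_list p' = sum_list p" "alpha k p' = alpha k p"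
    using partition_of_sorted[OF sorted] by blast
  ultimately show ?thesis unfolding partitions_def by auto
qed

lemma length_le_sum_list: "\<forall>x \<in> set p. 0 < x \<Longrightarrow> length p \<le> sum_list (p :: nat list)"
  by (induction p) auto

lemma finite_partitions: "finite (partitions n)"
proof (rule finite_subset)
  show "partitions n \<subseteq> {xs. set xs \<subseteq> {..n} \<and> length xs \<le> n}"
  proof
    fix p assume "p \<in> partitions n"
    then have "is_partition p" "sum_list p = n" unfolding partitions_def by auto
    then show "p \<in> {xs. set xs \<subseteq> {..n} \<and> length xs \<le> n}"
      using member_le_sum_list[of _ p] length_le_sum_list[of p]
      by (auto simp: is_partition_def)
  qed
qed (rule finite_lists_length_le, simp)

theorem theorem4p1:
  fixes m k n :: nat
  assumes "k \<ge> 1"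
    and "t m k \<le> int n"
    and "int n \<le> t (m + 1) k - 1"
  shows "b n k = m"
proof -
  have le: "alpha k p \<le> m" if "p \<in> partitions n" for p
    using alpha_le[of p k m] that assms(1,3) by (simp add: partitions_def)
  obtain p where "p \<in> partitions n" "m \<le> alpha k p"
    using exists_partition_alpha_ge[OF assms(1,2)] by blast
  with le have "m \<in> alpha k ` partitions n" by (metis image_eqI le_antisym)
  then show ?thesis
    unfolding b_def using le finite_partitions by (intro Max_eqI) auto
qed

end
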